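(* Let $0<q<1$ and let $X\geq 0$ be a random variable whose distribution $P_X$ has a $q$-density $f$ such that the $q$-moments $m_q(n;f)$ are finite for all $n\in\mathbb{N}$. If $$\limsup_{n\to\infty}\frac{\ln m_q(n;f)}{n^2}=A<\frac{\ln(1/q)}{2},$$ then $P_X$ is $q$-moment determinate.
   Context: Fix $0<q<1$. All random variables are non-negative. The Jackson $q$-integral is $\int_0^a g(t)\,d_qt=a(1-q)\sum_{j=0}^\infty g(aq^j)q^j$ for $a>0$, and the improper $q$-integral is $\int_0^\infty g(t)\,d_qt=(1-q)\sum_{j=-\infty}^{\infty}g(q^j)q^j$. A function $f$ on $(0,\infty)$ is a $q$-density of $X$ (with distribution function $F_X$) if $F_X(x)=\int_0^x f(t)\,d_qt$ for all $x>0$. The $n$-th $q$-moment is $m_q(n;f)=m_q(n;X)=\int_0^\infty t^nf(t)\,d_qt=(1-q)\sum_{j\in\mathbb{Z}}q^{j(n+1)}f(q^j)$, $n\in\mathbb{N}_0$. For functions $f,g$ on $(0,\infty)$ write $f\sim g$ iff $f(q^j)=g(q^j)$ for all $j\in\mathbb{Z}$. A distribution $P_X$ with $q$-density $f$ and finite $q$-moments of all orders is $q$-moment determinate if, whenever $Y$ is a random variable with $q$-density $g$ and $m_q(k;Y)=m_q(k;X)$ for all $k\in\mathbb{N}_0$, one has $f\sim g$; otherwise it is $q$-moment indeterminate. *)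

theory Defs
  imports "HOL-Probability.Probability"
begin

definition distr_fun :: "real measure \<Rightarrow> real \<Rightarrow> real" where
  "distr_fun P x = measure P {..x}"

definition jackson_int :: "real \<Rightarrow> real \<Rightarrow> (real \<Rightarrow> real) \<Rightarrow> real" where
  "jackson_int q a g = a * (1 - q) * (\<Sum>j. g (a * q ^ j) * q ^ j)"

definition q_density :: "real \<Rightarrow> real measure \<Rightarrow> (real \<Rightarrow> real) \<Rightarrow> bool" where
  "q_density q P f \<longleftrightarrow>
     (\<forall>x>0. summable (\<lambda>j. f (x * q ^ j) * q ^ j) \<and> distr_fun P x = jackson_int q x f)"

definition q_moment_term :: "real \<Rightarrow> nat \<Rightarrow> (real \<Rightarrow> real) \<Rightarrow> int \<Rightarrow> real" where
  "q_moment_term q n f j = q powi (j * int (n + 1)) * f (q powi j)"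

definition q_moment_finite :: "real \<Rightarrow> nat \<Rightarrow> (real \<Rightarrow> real) \<Rightarrow> bool" where
  "q_moment_finite q n f \<longleftrightarrow> q_moment_term q n f summable_on (UNIV :: int set)"

definition q_moment :: "real \<Rightarrow> nat \<Rightarrow> (real \<Rightarrow> real) \<Rightarrow> real" where
  "q_moment q n f = (1 - q) * infsum (q_moment_term q n f) (UNIV :: int set)"

definition q_equiv :: "real \<Rightarrow> (real \<Rightarrow> real) \<Rightarrow> (real \<Rightarrow> real) \<Rightarrow> bool" where
  "q_equiv q f g \<longleftrightarrow> (\<forall>j::int. f (q powi j) = g (q powi j))"

definition nonneg_distribution :: "real measure \<Rightarrow> bool" where
  "nonneg_distribution P \<longleftrightarrow> prob_space P \<and> sets P = sets borel \<and> (AE x in P. 0 \<le> x)"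

text \<open>q-moment determinacy of a distribution P with q-density f (and finite q-moments).
  Every random variable Y is represented by its distribution.\<close>
definition q_moment_determinate :: "real \<Rightarrow> real measure \<Rightarrow> (real \<Rightarrow> real) \<Rightarrow> bool" where
  "q_moment_determinate q P f \<longleftrightarrow>
     (\<forall>Q g. nonneg_distribution Q \<and> q_density q Q g \<and>
        (\<forall>k. q_moment_finite q k g \<and> q_moment q k g = q_moment q k f)
        \<longrightarrow> q_equiv q f g)"

end

theory Submission
  imports Defs "HOL-Computational_Algebra.Polynomial" "HOL-Real_Asymp.Real_Asymp"
begin

text \<open>Let g be a second q-density with the same q-moments and c = f - g. Then
  sum_j q^(j(n+1)) c(q^j) = 0 for all n, hence sum_j q^j P(q^j) c(q^j) = 0 for every polynomial P.
  Take P(x) = prod_(i=1..N) (x - q^i) * prod_(i=1..M) (q^i x - 1): it vanishes at the nodes q^j with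
  -M <= j <= N, j ~= 0, satisfies |P(1)| >= (1 - q)^(N+M), and is bounded by q^(N(N+1)/2) at the
  nodes j > N and by x^(N+M) q^(M(M+1)/2) at the nodes j < -M. This isolates c(1):
  (1 - q)^(N+M) |c(1)| is at most q^(N^2/2) times the 0-th plus q^(M^2/2) times the (N+M)-th
  q-moment of |c|. These moments grow at most like exp(beta n^2) with beta < ln(1/q)/2, so for
  M = rN with r large the bound decays faster than (1 - q)^((1+r)N) as N tends to infinity, forcing
  c(1) = 0. Applying this to x \<mapsto> c(q^k x) gives c(q^k) = 0.\<close>

definition vanishing_q_moments :: "real \<Rightarrow> (real \<Rightarrow> real) \<Rightarrow> bool" where
  "vanishing_q_moments q c \<longleftrightarrow> (\<forall>n. (q_moment_term q n c has_sum 0) UNIV)"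

lemma q_moment_term_mult_id:
  assumes "q \<noteq> 0"
  shows "q_moment_term q n (\<lambda>x. x * c x) = q_moment_term q (Suc n) c"
proof
  fix j :: int
  have "q powi (j * int (Suc n + 1)) = q powi (j * int (n + 1)) * q powi j"
    using assms by (simp add: power_int_add[symmetric] algebra_simps)
  then show "q_moment_term q n (\<lambda>x. x * c x) j = q_moment_term q (Suc n) c j"
    by (simp add: q_moment_term_def)
qed

lemma vanishing_q_moments_mult_poly:
  assumes "q \<noteq> 0" and "vanishing_q_moments q c"
  shows "vanishing_q_moments q (\<lambda>x. poly p x * c x)"
proof (induction p)
  case 0
  then show ?case by (simp add: vanishing_q_moments_def q_moment_term_def[abs_def])
next
  case (pCons a p)
  have "q_moment_term q n (\<lambda>x. poly (pCons a p) x * c x)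
      = (\<lambda>j. a * q_moment_term q n c j + q_moment_term q n (\<lambda>x. x * (poly p x * c x)) j)" for n
    by (simp add: q_moment_term_def fun_eq_iff algebra_simps)
  moreover have "((\<lambda>j. a * q_moment_term q n c j + q_moment_term q (Suc n) (\<lambda>x. poly p x * c x) j)
      has_sum a * 0 + 0) UNIV" for n
    using assms(2) pCons.IH by (intro has_sum_add has_sum_cmult_right) (auto simp: vanishing_q_moments_def)
  ultimately show ?case
    by (simp add: vanishing_q_moments_def q_moment_term_mult_id[OF assms(1)])
qed

lemma q_moment_term_abs:
  assumes "0 < q"
  shows "q_moment_term q n (\<lambda>x. \<bar>c x\<bar>) j = \<bar>q_moment_term q n c j\<bar>"
  using assms by (simp add: q_moment_term_def abs_mult)

lemma q_moment_finite_abs: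
  assumes "0 < q" and "q_moment_finite q n c"
  shows "q_moment_finite q n (\<lambda>x. \<bar>c x\<bar>)"
  using summable_on_iff_abs_summable_on_real[THEN iffD1, OF assms(2)[unfolded q_moment_finite_def]]
  by (simp add: q_moment_finite_def q_moment_term_abs[OF assms(1), abs_def])

lemma q_moment_term_diff:
  "q_moment_term q n (\<lambda>x. f x - g x) = (\<lambda>j. q_moment_term q n f j - q_moment_term q n g j)"
  by (simp add: q_moment_term_def fun_eq_iff right_diff_distrib)

lemma q_moment_finite_diff:
  assumes "q_moment_finite q n f" and "q_moment_finite q n g"
  shows "q_moment_finite q n (\<lambda>x. f x - g x)"
  using summable_on_add[OF assms(1)[unfolded q_moment_finite_def]
      summable_on_uminus[THEN iffD2, OF assms(2)[unfolded q_moment_finite_def]]]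
  by (simp add: q_moment_finite_def q_moment_term_diff)

lemma vanishing_q_moments_diff:
  assumes "q \<noteq> 1" and "\<And>n. q_moment_finite q n f" and "\<And>n. q_moment_finite q n g"
    and "\<And>n. q_moment q n f = q_moment q n g"
  shows "vanishing_q_moments q (\<lambda>x. f x - g x)"
  unfolding vanishing_q_moments_def
proof
  fix n
  have "((\<lambda>j. q_moment_term q n f j + - q_moment_term q n g j)
      has_sum infsum (q_moment_term q n f) UNIV + - infsum (q_moment_term q n g) UNIV) UNIV"
    using assms(2,3) by (intro has_sum_add has_sum_uminusI has_sum_infsum) (auto simp: q_moment_finite_def)
  moreover have "infsum (q_moment_term q n f) UNIV = infsum (q_moment_term q n g) UNIV"
    using assms(1) assms(4)[of n] by (simp add: q_moment_def)
  ultimately show "(q_moment_term q n (\<lambda>x. f x - g x) has_sum 0) UNIV"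
    by (simp add: q_moment_term_diff)
qed

lemma q_moment_term_rescale:
  assumes "q \<noteq> 0"
  shows "q_moment_term q n (\<lambda>x. c (q powi k * x))
    = (\<lambda>j. q powi (- k * int (n + 1)) * q_moment_term q n c (j + k))"
proof
  fix j :: int
  have "q powi (j * int (n + 1)) = q powi (- k * int (n + 1)) * q powi ((j + k) * int (n + 1))"
    using assms by (simp add: power_int_add[symmetric] algebra_simps)
  moreover have "q powi k * q powi j = q powi (j + k)"
    using assms by (simp add: power_int_add)
  ultimately show "q_moment_term q n (\<lambda>x. c (q powi k * x)) j
      = q powi (- k * int (n + 1)) * q_moment_term q n c (j + k)"
    by (simp add: q_moment_term_def)
qed

lemma has_sum_shift_int:
  "((\<lambda>j. h (j + k)) has_sum S) UNIV \<longleftrightarrow> (h has_sum S) (UNIV :: int set)"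
  by (rule has_sum_reindex_bij_betw) (rule bij_betwI[of _ _ _ "\<lambda>j. j - k"], auto)

lemma has_sum_q_moment_term_rescale:
  assumes "q \<noteq> 0" and "(q_moment_term q n c has_sum S) UNIV"
  shows "(q_moment_term q n (\<lambda>x. c (q powi k * x)) has_sum q powi (- k * int (n + 1)) * S) UNIV"
  unfolding q_moment_term_rescale[OF assms(1)]
  by (intro has_sum_cmult_right) (simp add: has_sum_shift_int assms(2))

lemma q_moment_rescale:
  assumes "0 < q" and "q_moment_finite q n c"
  shows "q_moment_finite q n (\<lambda>x. c (q powi k * x))"
    and "q_moment q n (\<lambda>x. c (q powi k * x)) = q powi (- k * int (n + 1)) * q_moment q n c"
proof -
  have "(q_moment_term q n (\<lambda>x. c (q powi k * x))
      has_sum q powi (- k * int (n + 1)) * infsum (q_moment_term q n c) UNIV) UNIV"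
    using assms by (intro has_sum_q_moment_term_rescale) (auto simp: q_moment_finite_def)
  then show "q_moment_finite q n (\<lambda>x. c (q powi k * x))"
    and "q_moment q n (\<lambda>x. c (q powi k * x)) = q powi (- k * int (n + 1)) * q_moment q n c"
    by (auto simp: q_moment_finite_def q_moment_def has_sum_iff)
qed

definition q_node_poly :: "real \<Rightarrow> nat \<Rightarrow> nat \<Rightarrow> real poly" where
  "q_node_poly q N M = (\<Prod>i\<in>{1..N}. [:- (q ^ i), 1:]) * (\<Prod>i\<in>{1..M}. [:- 1, q ^ i:])"

lemma poly_q_node_poly:
  "poly (q_node_poly q N M) x = (\<Prod>i\<in>{1..N}. x - q ^ i) * (\<Prod>i\<in>{1..M}. q ^ i * x - 1)"
  by (simp add: q_node_poly_def poly_prod algebra_simps)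

lemma poly_q_node_poly_eq_0:
  assumes "q \<noteq> 0" and "j \<noteq> 0" and "- int M \<le> j" and "j \<le> int N"
  shows "poly (q_node_poly q N M) (q powi j) = 0"
proof (cases "j > 0")
  case True
  then have "nat j \<in> {1..N}" and "q powi j - q ^ nat j = 0"
    using assms by (auto simp: power_int_def)
  then show ?thesis by (auto simp: poly_q_node_poly prod_zero_iff)
next
  case False
  then have "nat (- j) \<in> {1..M}" and "q ^ nat (- j) * q powi j - 1 = 0"
    using assms by (auto simp: power_int_def field_simps)
  then show ?thesis by (auto simp: poly_q_node_poly prod_zero_iff)
qed

lemma abs_poly_q_node_poly_1_ge:
  assumes "0 < q" and "q < 1"
  shows "(1 - q) ^ (N + M) \<le> \<bar>poly (q_node_poly q N M) 1\<bar>"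
proof -
  have "1 - q \<le> \<bar>1 - q ^ i\<bar>" if "i \<in> {1..K}" for i K
    using that assms power_decreasing[of 1 i q] by auto
  then have "(1 - q) ^ K \<le> (\<Prod>i\<in>{1..K}. \<bar>1 - q ^ i\<bar>)" for K
    using prod_mono[of "{1..K}" "\<lambda>_. 1 - q" "\<lambda>i. \<bar>1 - q ^ i\<bar>"] assms by auto
  then have "(1 - q) ^ N * (1 - q) ^ M \<le> (\<Prod>i\<in>{1..N}. \<bar>1 - q ^ i\<bar>) * (\<Prod>i\<in>{1..M}. \<bar>1 - q ^ i\<bar>)"
    using assms by (intro mult_mono prod_nonneg) auto
  then show ?thesis
    by (simp add: poly_q_node_poly abs_mult abs_prod abs_minus_commute power_add)
qed

lemma abs_poly_q_node_poly_le_near_0: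
  assumes "0 < q" and "q < 1" and "0 \<le> x" and "x \<le> q ^ N"
  shows "\<bar>poly (q_node_poly q N M) x\<bar> \<le> q ^ (\<Sum>i\<in>{1..N}. i)"
proof -
  have "\<bar>x - q ^ i\<bar> \<le> q ^ i" if "i \<in> {1..N}" for i
  proof -
    have "q ^ N \<le> q ^ i" using that assms by (intro power_decreasing) auto
    then show ?thesis unfolding abs_le_iff using assms by linarith
  qed
  then have "(\<Prod>i\<in>{1..N}. \<bar>x - q ^ i\<bar>) \<le> q ^ (\<Sum>i\<in>{1..N}. i)"
    unfolding power_sum by (intro prod_mono) auto
  moreover have "(\<Prod>i\<in>{1..M}. \<bar>q ^ i * x - 1\<bar>) \<le> 1"
  proof (intro prod_le_1 conjI abs_ge_zero)
    fix i
    have "q ^ i * x \<le> 1 * 1"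
      using assms power_le_one[of q i] order.trans[OF assms(4) power_le_one[of q N]]
      by (intro mult_mono) auto
    then show "\<bar>q ^ i * x - 1\<bar> \<le> 1" using assms by auto
  qed
  ultimately have "(\<Prod>i\<in>{1..N}. \<bar>x - q ^ i\<bar>) * (\<Prod>i\<in>{1..M}. \<bar>q ^ i * x - 1\<bar>)
      \<le> q ^ (\<Sum>i\<in>{1..N}. i) * 1"
    using assms(1) by (intro mult_mono prod_nonneg) auto
  then show ?thesis by (simp add: poly_q_node_poly abs_mult abs_prod)
qed

lemma abs_poly_q_node_poly_le_near_infinity:
  assumes "0 < q" and "q < 1" and "1 \<le> q ^ M * x"
  shows "\<bar>poly (q_node_poly q N M) x\<bar> \<le> x ^ (N + M) * q ^ (\<Sum>i\<in>{1..M}. i)"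
proof -
  have qM: "0 < q ^ M" "q ^ M \<le> 1" using assms by (auto simp: power_le_one)
  then have x: "1 \<le> x" using assms(3) by (meson mult_le_cancel_left1 order.trans)
  have "\<bar>x - q ^ i\<bar> \<le> x" for i
    using x assms power_le_one[of q i] zero_less_power[of q i] by (auto simp: abs_le_iff)
  then have first: "(\<Prod>i\<in>{1..N}. \<bar>x - q ^ i\<bar>) \<le> x ^ N"
    using prod_mono[of "{1..N}" "\<lambda>i. \<bar>x - q ^ i\<bar>" "\<lambda>_. x"] by auto
  have "\<bar>q ^ i * x - 1\<bar> \<le> q ^ i * x" if "i \<in> {1..M}" for i
  proof -
    have "q ^ M \<le> q ^ i" using that assms by (intro power_decreasing) auto
    then have "1 \<le> q ^ i * x" using mult_right_mono[of "q ^ M" "q ^ i" x] assms(3) x by linarith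
    then show ?thesis by auto
  qed
  then have "(\<Prod>i\<in>{1..M}. \<bar>q ^ i * x - 1\<bar>) \<le> (\<Prod>i\<in>{1..M}. q ^ i * x)"
    by (intro prod_mono) auto
  also have "\<dots> = q ^ (\<Sum>i\<in>{1..M}. i) * x ^ M"
    by (simp add: prod.distrib power_sum)
  finally have second: "(\<Prod>i\<in>{1..M}. \<bar>q ^ i * x - 1\<bar>) \<le> q ^ (\<Sum>i\<in>{1..M}. i) * x ^ M" .
  have "(\<Prod>i\<in>{1..N}. \<bar>x - q ^ i\<bar>) * (\<Prod>i\<in>{1..M}. \<bar>q ^ i * x - 1\<bar>)
      \<le> x ^ N * (q ^ (\<Sum>i\<in>{1..M}. i) * x ^ M)"
    using x by (intro mult_mono[OF first second] prod_nonneg) auto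
  then show ?thesis by (simp add: poly_q_node_poly abs_mult abs_prod power_add algebra_simps)
qed

lemma abs_le_if_has_sum_0:
  fixes T B :: "'a \<Rightarrow> real"
  assumes T: "(T has_sum 0) UNIV" and B: "(B has_sum S) UNIV"
    and "\<And>j. 0 \<le> B j" and "\<And>j. j \<noteq> a \<Longrightarrow> \<bar>T j\<bar> \<le> B j"
  shows "\<bar>T a\<bar> \<le> S"
proof -
  have "B a + s * T a \<le> S" if s: "s = 1 \<or> s = - 1" for s
  proof -
    have total: "((\<lambda>j. B j + s * T j) has_sum S + s * 0) UNIV"
      by (intro has_sum_add has_sum_cmult_right T B)
    have single: "((\<lambda>j. B j + s * T j) has_sum B a + s * T a) {a}"
      using has_sum_finite[of "{a}" "\<lambda>j. B j + s * T j"] by simp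
    have "0 \<le> B j + s * T j" if "j \<noteq> a" for j
      using assms(4)[OF that] s unfolding abs_le_iff by auto
    then have "B a + s * T a \<le> S + s * 0"
      by (intro has_sum_mono_neutral[OF single total]) auto
    then show ?thesis by simp
  qed
  from this[of 1] this[of "- 1"] assms(3)[of a] show ?thesis by (auto simp: abs_le_iff)
qed

lemma abs_q_moment_term_q_node_poly_le:
  assumes q: "0 < q" "q < 1" and "j \<noteq> 0"
  shows "\<bar>q_moment_term q 0 (\<lambda>x. poly (q_node_poly q N M) x * c x) j\<bar>
    \<le> q ^ (\<Sum>i\<in>{1..N}. i) * q_moment_term q 0 (\<lambda>x. \<bar>c x\<bar>) j
      + q ^ (\<Sum>i\<in>{1..M}. i) * q_moment_term q (N + M) (\<lambda>x. \<bar>c x\<bar>) j"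
    (is "\<bar>?T\<bar> \<le> ?E1 * ?a0 + ?E2 * ?aNM")
proof -
  define P where "P = q_node_poly q N M"
  have qj: "0 < q powi j" using q by simp
  have T: "\<bar>?T\<bar> = q powi j * \<bar>poly P (q powi j)\<bar> * \<bar>c (q powi j)\<bar>"
    using q by (simp add: P_def q_moment_term_def abs_mult)
  have nonneg: "0 \<le> ?E1 * ?a0" "0 \<le> ?E2 * ?aNM"
    using q by (simp_all add: q_moment_term_def)
  consider "int N < j" | "j < - int M" | "- int M \<le> j" "j \<le> int N" by linarith
  then show ?thesis
  proof cases
    case 1
    then have "q powi j \<le> q ^ N"
      using q by (simp add: power_int_def power_decreasing)
    then have "\<bar>poly P (q powi j)\<bar> \<le> ?E1"
      unfolding P_def using q qj by (intro abs_poly_q_node_poly_le_near_0) auto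
    then have "\<bar>?T\<bar> \<le> q powi j * ?E1 * \<bar>c (q powi j)\<bar>"
      unfolding T using qj by (intro mult_right_mono mult_left_mono) auto
    also have "\<dots> = ?E1 * ?a0" by (simp add: q_moment_term_def)
    finally show ?thesis using nonneg by linarith
  next
    case 2
    then have "1 \<le> q ^ M * q powi j"
      using q by (simp add: power_int_def power_inverse field_simps)
    then have "\<bar>poly P (q powi j)\<bar> \<le> (q powi j) ^ (N + M) * ?E2"
      unfolding P_def using q by (intro abs_poly_q_node_poly_le_near_infinity) auto
    then have "\<bar>?T\<bar> \<le> q powi j * ((q powi j) ^ (N + M) * ?E2) * \<bar>c (q powi j)\<bar>"
      unfolding T using qj by (intro mult_right_mono mult_left_mono) auto
    also have "\<dots> = ?E2 * ?aNM"
    proof -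
      have "q powi (j * int (N + M + 1)) = (q powi j) ^ (N + M + 1)"
        by (simp only: power_int_mult power_int_of_nat)
      then show ?thesis by (simp add: q_moment_term_def)
    qed
    finally show ?thesis using nonneg by linarith
  next
    case 3
    then have "?T = 0"
      using poly_q_node_poly_eq_0[of q j M N] q assms(3) by (simp add: q_moment_term_def)
    then show ?thesis using nonneg by simp
  qed
qed

lemma abs_at_1_le_q_moments:
  assumes q: "0 < q" "q < 1" and vanishing: "vanishing_q_moments q c"
    and finite: "\<And>n. q_moment_finite q n c"
  shows "(1 - q) ^ (N + M) * ((1 - q) * \<bar>c 1\<bar>)
    \<le> q ^ (\<Sum>i\<in>{1..N}. i) * q_moment q 0 (\<lambda>x. \<bar>c x\<bar>)
      + q ^ (\<Sum>i\<in>{1..M}. i) * q_moment q (N + M) (\<lambda>x. \<bar>c x\<bar>)"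
    (is "_ \<le> ?bound")
proof -
  define P where "P = q_node_poly q N M"
  define T where "T = q_moment_term q 0 (\<lambda>x. poly P x * c x)"
  define a where "a n = q_moment_term q n (\<lambda>x. \<bar>c x\<bar>)" for n
  have a_sum: "(a n has_sum q_moment q n (\<lambda>x. \<bar>c x\<bar>) / (1 - q)) UNIV" for n
    using q_moment_finite_abs[OF q(1) finite] q
    by (simp add: a_def q_moment_def q_moment_finite_def)
  have T_sum: "(T has_sum 0) UNIV"
    using vanishing_q_moments_mult_poly[OF _ vanishing, of P] q
    by (simp add: T_def vanishing_q_moments_def)
  have "\<bar>T 0\<bar> \<le> ?bound / (1 - q)"
  proof (rule abs_le_if_has_sum_0[OF T_sum])
    show "((\<lambda>j. q ^ (\<Sum>i\<in>{1..N}. i) * a 0 j + q ^ (\<Sum>i\<in>{1..M}. i) * a (N + M) j)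
        has_sum ?bound / (1 - q)) UNIV"
      unfolding add_divide_distrib times_divide_eq_right[symmetric]
      by (intro has_sum_add has_sum_cmult_right a_sum)
    show "0 \<le> q ^ (\<Sum>i\<in>{1..N}. i) * a 0 j + q ^ (\<Sum>i\<in>{1..M}. i) * a (N + M) j" for j
      using q by (simp add: a_def q_moment_term_def)
    show "\<bar>T j\<bar> \<le> q ^ (\<Sum>i\<in>{1..N}. i) * a 0 j + q ^ (\<Sum>i\<in>{1..M}. i) * a (N + M) j"
      if "j \<noteq> 0" for j
      unfolding T_def P_def a_def by (rule abs_q_moment_term_q_node_poly_le[OF q that])
  qed
  then have upper: "(1 - q) * \<bar>T 0\<bar> \<le> ?bound"
    using q by (simp add: pos_le_divide_eq mult.commute)
  have lower: "(1 - q) ^ (N + M) * \<bar>c 1\<bar> \<le> \<bar>T 0\<bar>"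
    using abs_poly_q_node_poly_1_ge[OF q]
    by (simp add: T_def P_def q_moment_term_def abs_mult mult_right_mono)
  have "(1 - q) ^ (N + M) * ((1 - q) * \<bar>c 1\<bar>) = (1 - q) * ((1 - q) ^ (N + M) * \<bar>c 1\<bar>)"
    by (simp only: mult.left_commute)
  also have "\<dots> \<le> (1 - q) * \<bar>T 0\<bar>"
    using lower q by (intro mult_left_mono) auto
  finally show ?thesis using upper by linarith
qed

lemma power_gauss_sum_le_exp:
  assumes "0 < q" and "q < 1"
  shows "q ^ (\<Sum>i\<in>{1..N}. i) \<le> exp (ln q * real N ^ 2 / 2)"
proof -
  define s where "s = (\<Sum>i\<in>{1..N}. i)"
  have "2 * real s = real N * (real N + 1)"
    using double_gauss_sum_from_Suc_0[of N, where 'a = real] by (simp add: s_def of_nat_sum)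
  then have "real N ^ 2 / 2 \<le> real s"
    by (simp add: power2_eq_square algebra_simps)
  then have "real s * ln q \<le> ln q * real N ^ 2 / 2"
    using assms by (simp add: mult_left_mono_neg mult.commute)
  moreover have "q ^ s = exp (real s * ln q)"
    using assms by (simp add: exp_of_nat_mult)
  ultimately show ?thesis by (simp add: s_def)
qed

lemma nonpos_if_gauss_sum_bounds:
  fixes m :: "nat \<Rightarrow> real"
  assumes q: "0 < q" "q < 1" and \<beta>: "\<beta> < ln (1 / q) / 2"
    and m_nonneg: "\<And>n. 0 \<le> m n"
    and m_growth: "\<forall>\<^sub>F n in sequentially. m n \<le> K * exp (\<beta> * real n ^ 2 + \<gamma> * real n)"
    and bound: "\<And>N M. (1 - q) ^ (N + M) * a
      \<le> q ^ (\<Sum>i\<in>{1..N}. i) * m 0 + q ^ (\<Sum>i\<in>{1..M}. i) * m (N + M)"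
  shows "a \<le> 0"
proof -
  define l where "l = ln q"
  define \<mu> where "\<mu> = - ln (1 - q)"
  have l: "l < 0" and \<beta>': "\<beta> < - l / 2" using q \<beta> by (simp_all add: l_def ln_div)
  have "\<forall>\<^sub>F r in sequentially. \<beta> * (1 + real r) ^ 2 + l * real r ^ 2 / 2 < 0"
    using \<beta>' by real_asymp
  then obtain r :: nat where r: "\<beta> * (1 + real r) ^ 2 + l * real r ^ 2 / 2 < 0"
    by (auto simp: eventually_sequentially)
  obtain n0 where n0: "\<And>n. n \<ge> n0 \<Longrightarrow> m n \<le> K * exp (\<beta> * real n ^ 2 + \<gamma> * real n)"
    using m_growth by (auto simp: eventually_sequentially)
  define F where "F N = m 0 * exp (l / 2 * real N ^ 2 + \<mu> * (1 + real r) * real N)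
    + K * exp ((\<beta> * (1 + real r) ^ 2 + l * real r ^ 2 / 2) * real N ^ 2
               + (\<mu> + \<gamma>) * (1 + real r) * real N)" for N :: nat
  have exp_quadratic: "(\<lambda>N::nat. exp (A * real N ^ 2 + B * real N)) \<longlonglongrightarrow> 0" if "A < 0" for A B
    using that by real_asymp
  have "F \<longlonglongrightarrow> m 0 * 0 + K * 0"
    unfolding F_def using l r by (intro tendsto_add tendsto_mult tendsto_const exp_quadratic) auto
  then have "F \<longlonglongrightarrow> 0" by simp
  moreover have "a \<le> F N" if "N \<ge> n0" for N
  proof -
    define M where "M = r * N"
    have n0_le: "n0 \<le> N + M" using that by (simp add: M_def)
    have "(1 - q) ^ (N + M) * a \<le> exp (l * real N ^ 2 / 2) * m 0
        + exp (l * real M ^ 2 / 2) * (K * exp (\<beta> * real (N + M) ^ 2 + \<gamma> * real (N + M)))"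
      using bound[of N M] power_gauss_sum_le_exp[OF q, of N] power_gauss_sum_le_exp[OF q, of M]
        n0[OF n0_le] m_nonneg[of 0] m_nonneg[of "N + M"] unfolding l_def
      by (smt (verit) mult_mono mult_right_mono exp_gt_zero zero_le_power)
    moreover have "exp (\<mu> * real (N + M)) * (1 - q) ^ (N + M) = 1"
    proof -
      have "(1 - q) ^ (N + M) = exp (real (N + M) * ln (1 - q))" using q by (subst exp_of_nat_mult) simp
      then show ?thesis by (simp add: \<mu>_def flip: exp_add)
    qed
    ultimately have "a \<le> exp (\<mu> * real (N + M)) * (exp (l * real N ^ 2 / 2) * m 0
        + exp (l * real M ^ 2 / 2) * (K * exp (\<beta> * real (N + M) ^ 2 + \<gamma> * real (N + M))))"
      by (metis exp_gt_zero mult_left_mono mult.assoc mult_1 less_imp_le)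
    also have "\<dots> = F N"
      by (simp add: F_def M_def exp_add[symmetric] power2_eq_square algebra_simps)
    finally show ?thesis .
  qed
  ultimately show ?thesis
    using LIMSEQ_le_const by blast
qed

lemma vanishing_q_moments_at_1:
  assumes q: "0 < q" "q < 1" and vanishing: "vanishing_q_moments q c"
    and finite: "\<And>n. q_moment_finite q n c" and \<beta>: "\<beta> < ln (1 / q) / 2"
    and growth: "\<forall>\<^sub>F n in sequentially.
      q_moment q n (\<lambda>x. \<bar>c x\<bar>) \<le> K * exp (\<beta> * real n ^ 2 + \<gamma> * real n)"
  shows "c 1 = 0"
proof -
  have "(1 - q) * \<bar>c 1\<bar> \<le> 0"
  proof (rule nonpos_if_gauss_sum_bounds[OF q \<beta> _ growth])
    show "0 \<le> q_moment q n (\<lambda>x. \<bar>c x\<bar>)" for n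
      unfolding q_moment_def using q by (intro mult_nonneg_nonneg infsum_nonneg) (auto simp: q_moment_term_def)
  qed (rule abs_at_1_le_q_moments[OF q vanishing finite])
  then show ?thesis using q by (simp add: mult_le_0_iff)
qed

lemma vanishing_q_moments_eq_0:
  assumes q: "0 < q" "q < 1" and vanishing: "vanishing_q_moments q c"
    and finite: "\<And>n. q_moment_finite q n c" and \<beta>: "\<beta> < ln (1 / q) / 2"
    and growth: "\<forall>\<^sub>F n in sequentially.
      q_moment q n (\<lambda>x. \<bar>c x\<bar>) \<le> K * exp (\<beta> * real n ^ 2 + \<gamma> * real n)"
  shows "c (q powi k) = 0"
proof -
  define c' where "c' x = c (q powi k * x)" for x
  have vanishing': "vanishing_q_moments q c'"
    using vanishing has_sum_q_moment_term_rescale[of q n c 0 k for n] q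
    by (auto simp: vanishing_q_moments_def c'_def[abs_def])
  have finite': "q_moment_finite q n c'" for n
    using q_moment_rescale(1)[OF q(1) finite] by (simp add: c'_def[abs_def])
  have "\<forall>\<^sub>F n in sequentially. q_moment q n (\<lambda>x. \<bar>c' x\<bar>)
      \<le> (q powi (- k) * K) * exp (\<beta> * real n ^ 2 + (\<gamma> - real_of_int k * ln q) * real n)"
    using growth
  proof eventually_elim
    case (elim n)
    have "q powi (- k * int (n + 1)) = q powi (- k) * q powi (- k * int n)"
      using q by (simp add: power_int_add[symmetric] algebra_simps)
    also have "q powi (- k * int n) = exp (- real_of_int k * ln q * real n)"
      using q exp_power_int[of "ln q" "- k * int n"] by (simp add: algebra_simps)
    finally have scale: "q powi (- k * int (n + 1)) = q powi (- k) * exp (- real_of_int k * ln q * real n)" .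
    have "q_moment q n (\<lambda>x. \<bar>c' x\<bar>) = q powi (- k * int (n + 1)) * q_moment q n (\<lambda>x. \<bar>c x\<bar>)"
      using q_moment_rescale(2)[OF q(1) q_moment_finite_abs[OF q(1) finite]] by (simp add: c'_def)
    also have "\<dots> \<le> q powi (- k * int (n + 1)) * (K * exp (\<beta> * real n ^ 2 + \<gamma> * real n))"
      using elim q by (intro mult_left_mono) auto
    also have "\<dots> = (q powi (- k) * K) * (exp (- real_of_int k * ln q * real n) * exp (\<beta> * real n ^ 2 + \<gamma> * real n))"
      by (simp only: scale mult_ac)
    also have "\<dots> = (q powi (- k) * K) * exp (\<beta> * real n ^ 2 + (\<gamma> - real_of_int k * ln q) * real n)"
      by (simp add: mult_exp_exp algebra_simps)
    finally show ?case .
  qed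
  then have "c' 1 = 0" by (rule vanishing_q_moments_at_1[OF q vanishing' finite' \<beta>])
  then show ?thesis by (simp add: c'_def)
qed

lemma eventually_le_exp_if_limsup_less:
  fixes m :: "nat \<Rightarrow> real"
  assumes "limsup (\<lambda>n. ereal (ln (m n) / (real n)\<^sup>2)) < ereal \<beta>"
  shows "\<forall>\<^sub>F n in sequentially. m n \<le> exp (\<beta> * (real n)\<^sup>2)"
  using Limsup_lessD[OF assms] eventually_gt_at_top[of 0]
proof eventually_elim
  case (elim n)
  then have "ln (m n) < \<beta> * (real n)\<^sup>2" by (simp add: pos_divide_less_eq)
  have "m n \<le> exp (ln (m n))" \<comment> \<open>also when \<open>m n \<le> 0\<close>, where \<open>ln (m n)\<close> is a junk value\<close>
    by (smt (verit) exp_gt_zero exp_ln)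
  also have "\<dots> \<le> exp (\<beta> * (real n)\<^sup>2)" using \<open>ln (m n) < _\<close> by simp
  finally show ?case .
qed

lemma q_density_nonneg:
  assumes q: "0 < q" "q < 1" and "finite_measure P" and "sets P = sets borel"
    and density: "q_density q P f" and x: "0 < x"
  shows "0 \<le> f x"
proof -
  \<comment> \<open>\<open>F(q x) \<le> F(x)\<close>, and the Jackson sum at \<open>x\<close> is \<open>f x\<close> plus \<open>q\<close> times the one at \<open>q x\<close>\<close>
  define S where "S y = (\<Sum>j. f (y * q ^ j) * q ^ j)" for y
  have summable: "summable (\<lambda>j. f (y * q ^ j) * q ^ j)"
    and F: "distr_fun P y = y * (1 - q) * S y" if "0 < y" for y
    using density that by (auto simp: q_density_def jackson_int_def S_def)
  have "(\<lambda>j. f (x * q ^ Suc j) * q ^ Suc j) = (\<lambda>j. q * (f (q * x * q ^ j) * q ^ j))"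
    by (simp add: algebra_simps)
  then have S_step: "S x = f x + q * S (q * x)"
    using suminf_split_head[OF summable[OF x]] suminf_mult[OF summable, of "q * x" q] q x
    by (simp add: S_def)
  have "distr_fun P (q * x) \<le> distr_fun P x"
    unfolding distr_fun_def using assms
    by (intro finite_measure.finite_measure_mono) (auto simp: mult_le_cancel_right1)
  then have "q * x * (1 - q) * S (q * x) \<le> x * (1 - q) * S x"
    using F[of x] F[of "q * x"] q x by simp
  then have "x * (1 - q) * (q * S (q * x)) \<le> x * (1 - q) * f x + x * (1 - q) * (q * S (q * x))"
    by (simp only: S_step distrib_left mult_ac)
  then have "x * (1 - q) * 0 \<le> x * (1 - q) * f x"
    by simp
  moreover have "0 < x * (1 - q)" using q x by simp
  ultimately show ?thesis by (simp only: mult_le_cancel_left_pos)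
qed

lemma q_moment_abs_diff_le:
  assumes q: "0 < q" "q < 1"
    and "\<And>j. 0 \<le> f (q powi j)" and "\<And>j. 0 \<le> g (q powi j)"
    and f: "q_moment_finite q n f" and g: "q_moment_finite q n g"
  shows "q_moment q n (\<lambda>x. \<bar>f x - g x\<bar>) \<le> q_moment q n f + q_moment q n g"
proof -
  have bound: "q_moment_term q n (\<lambda>x. \<bar>f x - g x\<bar>) j \<le> q_moment_term q n f j + q_moment_term q n g j" for j
  proof -
    have "\<bar>f (q powi j) - g (q powi j)\<bar> \<le> f (q powi j) + g (q powi j)"
      unfolding abs_le_iff using assms(3,4)[of j] by linarith
    then show ?thesis
      using q by (simp add: q_moment_term_def distrib_left[symmetric] mult_left_mono)
  qed
  have f': "q_moment_term q n f summable_on UNIV" and g': "q_moment_term q n g summable_on UNIV"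
    using f g by (simp_all add: q_moment_finite_def)
  have "q_moment_term q n (\<lambda>x. \<bar>f x - g x\<bar>) summable_on UNIV"
    using q_moment_finite_abs[OF q(1) q_moment_finite_diff[OF f g]] by (simp add: q_moment_finite_def)
  then have "infsum (q_moment_term q n (\<lambda>x. \<bar>f x - g x\<bar>)) UNIV
      \<le> infsum (\<lambda>j. q_moment_term q n f j + q_moment_term q n g j) UNIV"
    by (rule infsum_mono[OF _ summable_on_add[OF f' g'] bound])
  also have "\<dots> = infsum (q_moment_term q n f) UNIV + infsum (q_moment_term q n g) UNIV"
    by (rule infsum_add[OF f' g'])
  finally show ?thesis
    using q unfolding q_moment_def by (simp add: distrib_left[symmetric] mult_left_mono)
qed

lemma eq_at_q_nodes_if_same_q_moments:
  assumes q: "0 < q" "q < 1" and \<beta>: "\<beta> < ln (1 / q) / 2"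
    and f_nonneg: "\<And>j. 0 \<le> f (q powi j)" and g_nonneg: "\<And>j. 0 \<le> g (q powi j)"
    and f_finite: "\<And>n. q_moment_finite q n f" and g_finite: "\<And>n. q_moment_finite q n g"
    and same_moments: "\<And>n. q_moment q n g = q_moment q n f"
    and f_growth: "\<forall>\<^sub>F n in sequentially. q_moment q n f \<le> exp (\<beta> * (real n)\<^sup>2)"
  shows "f (q powi k) = g (q powi k)"
proof -
  have vanishing: "vanishing_q_moments q (\<lambda>x. f x - g x)"
    using q f_finite g_finite same_moments by (intro vanishing_q_moments_diff) auto
  have finite: "q_moment_finite q n (\<lambda>x. f x - g x)" for n
    using f_finite g_finite by (rule q_moment_finite_diff)
  have growth: "\<forall>\<^sub>F n in sequentially.
      q_moment q n (\<lambda>x. \<bar>f x - g x\<bar>) \<le> 2 * exp (\<beta> * real n ^ 2 + 0 * real n)"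
    using f_growth
  proof eventually_elim
    case (elim n)
    have "q_moment q n (\<lambda>x. \<bar>f x - g x\<bar>) \<le> q_moment q n f + q_moment q n g"
      using q f_nonneg g_nonneg f_finite g_finite by (rule q_moment_abs_diff_le)
    then show ?case using elim same_moments[of n] by simp
  qed
  have "f (q powi k) - g (q powi k) = 0"
    by (rule vanishing_q_moments_eq_0[OF q vanishing finite \<beta> growth])
  then show ?thesis by simp
qed

theorem proposition1:
  fixes q A :: real and M :: "'a measure" and X :: "'a \<Rightarrow> real" and f :: "real \<Rightarrow> real"
  assumes "0 < q" and "q < 1"
    and "prob_space M" and "X \<in> borel_measurable M" and "AE \<omega> in M. 0 \<le> X \<omega>"
    and "q_density q (distr M borel X) f"
    and "\<forall>n. q_moment_finite q n f"
    and "limsup (\<lambda>n. ereal (ln (q_moment q n f) / (real n)\<^sup>2)) = ereal A"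
    and "A < ln (1 / q) / 2"
  shows "q_moment_determinate q (distr M borel X) f"
proof -
  have q: "0 < q" "q < 1" by fact+
  define \<beta> where "\<beta> = (A + ln (1 / q) / 2) / 2"
  have \<beta>: "\<beta> < ln (1 / q) / 2" using assms(9) by (simp add: \<beta>_def)
  have f_growth: "\<forall>\<^sub>F n in sequentially. q_moment q n f \<le> exp (\<beta> * (real n)\<^sup>2)"
    using assms(8,9) by (intro eventually_le_exp_if_limsup_less) (simp add: \<beta>_def)
  have f_nonneg: "0 \<le> f (q powi j)" for j
    using q prob_space.prob_space_distr[OF assms(3,4)] assms(6)
    by (intro q_density_nonneg[of q "distr M borel X"]) (auto simp: prob_space.finite_measure)
  show ?thesis unfolding q_moment_determinate_def q_equiv_def
  proof (intro allI impI)
    fix Q g k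
    assume Q: "nonneg_distribution Q \<and> q_density q Q g
      \<and> (\<forall>k. q_moment_finite q k g \<and> q_moment q k g = q_moment q k f)"
    have g_nonneg: "0 \<le> g (q powi j)" for j
      using Q q by (intro q_density_nonneg[of q Q g]) (auto simp: nonneg_distribution_def prob_space.finite_measure)
    show "f (q powi k) = g (q powi k)"
      using Q assms(7) f_nonneg g_nonneg f_growth
      by (intro eq_at_q_nodes_if_same_q_moments[where f = f and g = g, OF q \<beta>]) auto
  qed
qed

end
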